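(* Let $n\ge1$. The map $\varphi:\Pi_n\to\Pi_n$ described below is well defined (at every step $i\in\mathcal C(\pi)\cup\mathcal T(\pi)$ the current vacant set $V'$ has at least $\gamma_i(\pi)$ elements, and the resulting set of edges is the edge set of a partition of $[n]$), it is an involution, and it preserves the type: $\lambda(\varphi(\pi))=\lambda(\pi)$ for all $\pi\in\Pi_n$. Construction of $\varphi(\pi)$: start with $V'=\emptyset$ and an empty edge set $E'$. For $i=1,2,\dots,n$: if $i$ is an opener of $\pi$, add $i$ to $V'$; if $i$ is a singleton of $\pi$, do nothing; if $i$ is a closer or transient of $\pi$, let $x$ be the $\gamma_i(\pi)$-th largest element of $V'$, add the edge $(x,i)$ to $E'$ and remove $x$ from $V'$, and moreover if $i$ is a transient of $\pi$, add $i$ to $V'$. Then $\varphi(\pi)$ is the partition of $[n]$ whose edges are exactly $E'$ (blocks are the connected components of the graph $([n],E')$).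
   Context: A partition of $[n]=\{1,\dots,n\}$ is a set of pairwise disjoint nonempty subsets (blocks) of $[n]$ whose union is $[n]$; $\Pi_n$ is the set of partitions of $[n]$. The edges of $\pi$ are the pairs $(i,j)$, $i<j$, with $i,j$ consecutive elements of the same block. For a block $B$ with $|B|\ge2$, its minimum is an opener, its maximum is a closer, its other elements are transients; the element of a one-element block is a singleton. $\mathcal O(\pi),\mathcal C(\pi),\mathcal S(\pi),\mathcal T(\pi)$ are the sets of openers, closers, singletons, transients, and $\lambda(\pi)=(\mathcal O(\pi),\mathcal C(\pi),\mathcal S(\pi),\mathcal T(\pi))$ is the type of $\pi$. For $i\in[n]$, the vacant vertices of $\pi$ before $i$ are the elements $x\le i-1$ which are the left endpoint of an edge $(x,y)$ of $\pi$ with $y\ge i$. If $i\in\mathcal C(\pi)\cup\mathcal T(\pi)$, there is a unique edge $(j,i)$ of $\pi$ with $j<i$, and $\gamma_i(\pi)$ denotes the rank of $j$ among the vacant vertices of $\pi$ before $i$, listed in increasing order (so $\gamma_i(\pi)=1$ if $j$ is the smallest one). *)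

theory Defs
  imports Main "HOL-Library.Disjoint_Sets"
begin

type_synonym setpart = "nat set set"

definition Partitions :: "nat \<Rightarrow> setpart set" where
  "Partitions n = {P. partition_on {1..n} P}"

definition edges :: "setpart \<Rightarrow> (nat \<times> nat) set" where
  "edges P = {(i, j). i < j \<and> (\<exists>B\<in>P. i \<in> B \<and> j \<in> B \<and> \<not> (\<exists>k\<in>B. i < k \<and> k < j))}"

definition openers :: "setpart \<Rightarrow> nat set" where
  "openers P = {Min B | B. B \<in> P \<and> card B \<ge> 2}"

definition closers :: "setpart \<Rightarrow> nat set" where
  "closers P = {Max B | B. B \<in> P \<and> card B \<ge> 2}"

definition singletons :: "setpart \<Rightarrow> nat set" where
  "singletons P = {x. {x} \<in> P}"

definition transients :: "setpart \<Rightarrow> nat set" where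
  "transients P = {x. \<exists>B\<in>P. x \<in> B \<and> card B \<ge> 2 \<and> x \<noteq> Min B \<and> x \<noteq> Max B}"

definition ptype :: "setpart \<Rightarrow> nat set \<times> nat set \<times> nat set \<times> nat set" where
  "ptype P = (openers P, closers P, singletons P, transients P)"

definition vacant :: "setpart \<Rightarrow> nat \<Rightarrow> nat set" where
  "vacant P i = {x. x < i \<and> (\<exists>y. (x, y) \<in> edges P \<and> y \<ge> i)}"

text \<open>The unique j with (j,i) an edge (for closers/transients).\<close>
definition pred_vertex :: "setpart \<Rightarrow> nat \<Rightarrow> nat" where
  "pred_vertex P i = (THE j. (j, i) \<in> edges P)"

definition gamma :: "setpart \<Rightarrow> nat \<Rightarrow> nat" where
  "gamma P i = card {x \<in> vacant P i. x \<le> pred_vertex P i}"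

definition kth_largest :: "nat set \<Rightarrow> nat \<Rightarrow> nat" where
  "kth_largest V k = rev (sorted_list_of_set V) ! (k - 1)"

definition phi_step :: "setpart \<Rightarrow> nat set \<times> (nat \<times> nat) set \<Rightarrow> nat \<Rightarrow> nat set \<times> (nat \<times> nat) set" where
  "phi_step P st i =
     (let V = fst st; E = snd st in
      if i \<in> openers P then (insert i V, E)
      else if i \<in> closers P \<union> transients P then
        (let x = kth_largest V (gamma P i) in
          ((V - {x}) \<union> (if i \<in> transients P then {i} else {}), insert (x, i) E))
      else (V, E))"

definition phi_state :: "setpart \<Rightarrow> nat \<Rightarrow> nat set \<times> (nat \<times> nat) set" where
  "phi_state P m = foldl (phi_step P) ({}, {}) [1..<Suc m]"

definition components_partition :: "nat \<Rightarrow> (nat \<times> nat) set \<Rightarrow> setpart" where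
  "components_partition n E = {(E \<union> E\<inverse>)\<^sup>* `` {x} \<inter> {1..n} | x. x \<in> {1..n}}"

definition phi :: "nat \<Rightarrow> setpart \<Rightarrow> setpart" where
  "phi n P = components_partition n (snd (phi_state P n))"

end

theory Submission
  imports Defs
begin

text \<open>
  A partition is determined by its edges, which form an arc diagram: arcs x < y inside {1..n}
  with at most one arc leaving and at most one arc entering each vertex. Conversely, the
  connected components of an arc diagram form a partition whose edges are exactly its arcs.
  Openers, closers, transients and singletons are the vertices that are only left endpoints,
  only right endpoints, both, or neither.

  Processing i = 1, ..., n, the construction keeps V' equal to the set of left endpoints below i
  whose arc has not been drawn yet, while the arcs drawn so far end exactly at the right
  endpoints below i. Hence |V'| is the number of vacant vertices before i, which is at least
  gamma_i, and after step n every left endpoint has been used: phi(pi) has the same left and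
  right endpoints as pi, that is, the same type.

  Moreover V' before step i is exactly the vacant set of phi(pi) before i, and the arc into i
  starts at the element of V' of rank gamma_i(pi) from the top. So
  gamma_i(phi(pi)) = |V'| + 1 - gamma_i(pi), and the construction run on phi(pi) picks the
  element of rank gamma_i(pi) from the bottom of the vacant set of pi, which is the
  predecessor of i in pi.
\<close>

section \<open>Ranks in finite sets of naturals\<close>

lemma card_le_nth_sorted:
  fixes s :: "nat list"
  assumes sorted: "sorted_wrt (<) s" and j: "j < length s"
  shows "card {v \<in> set s. v \<le> s ! j} = Suc j"
proof -
  have "{v \<in> set s. v \<le> s ! j} = (!) s ` {..j}"
  proof (intro set_eqI iffI)
    fix v assume "v \<in> {v \<in> set s. v \<le> s ! j}"
    then obtain k where k: "k < length s" "v = s ! k" "s ! k \<le> s ! j"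
      by (auto simp: in_set_conv_nth)
    then have "k \<le> j"
      using sorted j by (metis not_le_imp_less sorted_wrt_nth_less leD)
    then show "v \<in> (!) s ` {..j}" using k by auto
  next
    fix v assume "v \<in> (!) s ` {..j}"
    then obtain k where "k \<le> j" "v = s ! k" by auto
    then show "v \<in> {v \<in> set s. v \<le> s ! j}"
      using sorted j by (auto simp: le_less sorted_wrt_nth_less)
  qed
  moreover have "inj_on ((!) s) {..j}"
    using sorted j by (auto simp: inj_on_def strict_sorted_iff nth_eq_iff_index_eq)
  ultimately show ?thesis by (simp add: card_image)
qed

lemma kth_largest_eq_nth:
  assumes "finite V" "1 \<le> k" "k \<le> card V"
  shows "kth_largest V k = sorted_list_of_set V ! (card V - k)"
  using assms by (simp add: kth_largest_def rev_nth Suc_diff_Suc)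

lemma kth_largest_mem_rank:
  assumes "finite V" "1 \<le> k" "k \<le> card V"
  shows "kth_largest V k \<in> V" "card {v \<in> V. v \<le> kth_largest V k} = card V + 1 - k"
proof -
  let ?s = "sorted_list_of_set V"
  have j: "card V - k < length ?s" using assms by simp
  show "kth_largest V k \<in> V"
    using nth_mem[OF j] assms by (simp add: kth_largest_eq_nth)
  show "card {v \<in> V. v \<le> kth_largest V k} = card V + 1 - k"
    using card_le_nth_sorted[OF _ j] assms by (simp add: kth_largest_eq_nth)
qed

lemma kth_largest_rank:
  assumes "finite V" "x \<in> V"
  shows "kth_largest V (card V + 1 - card {v \<in> V. v \<le> x}) = x"
proof -
  let ?s = "sorted_list_of_set V"
  obtain j where j: "j < length ?s" "?s ! j = x"
    using assms by (metis in_set_conv_nth set_sorted_list_of_set)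
  have "card {v \<in> V. v \<le> x} = Suc j"
    using card_le_nth_sorted[OF _ j(1)] j assms by simp
  then show ?thesis
    using j assms by (simp add: kth_largest_def rev_nth)
qed

section \<open>Arc diagrams\<close>

definition arc_diagram :: "nat \<Rightarrow> (nat \<times> nat) set \<Rightarrow> bool" where
  "arc_diagram n F \<longleftrightarrow>
     F \<subseteq> {(x, y). 1 \<le> x \<and> x < y \<and> y \<le> n} \<and> single_valued F \<and> single_valued (F\<inverse>)"

lemma arc_diagramD:
  assumes "arc_diagram n F"
  shows "(x, y) \<in> F \<Longrightarrow> 1 \<le> x \<and> x < y \<and> y \<le> n"
    and "(x, y) \<in> F \<Longrightarrow> (x, z) \<in> F \<Longrightarrow> y = z"
    and "(x, z) \<in> F \<Longrightarrow> (y, z) \<in> F \<Longrightarrow> x = y"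
  using assms unfolding arc_diagram_def single_valued_def by auto

lemma arc_diagram_mono: "arc_diagram m F \<Longrightarrow> m \<le> n \<Longrightarrow> arc_diagram n F"
  unfolding arc_diagram_def by auto

lemma arc_diagram_insert:
  assumes "arc_diagram n F" "1 \<le> x" "x < y" "y \<le> n" "x \<notin> Domain F" "y \<notin> Range F"
  shows "arc_diagram n (insert (x, y) F)"
  using assms unfolding arc_diagram_def single_valued_def by (auto simp: Domain_iff Range_iff)

lemma card_Domain_eq_card_Range:
  assumes "arc_diagram n F"
  shows "card (Domain F) = card (Range F)"
proof -
  have "F \<subseteq> {1..n} \<times> {1..n}" using assms unfolding arc_diagram_def by auto
  then have "finite F" by (rule finite_subset) simp
  moreover have "inj_on fst F" "inj_on snd F"
    using arc_diagramD(2,3)[OF assms] by (auto simp: inj_on_def)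
  ultimately show ?thesis by (simp add: Domain_fst Range_snd card_image)
qed

lemma arc_diagram_subset: "arc_diagram n F \<Longrightarrow> G \<subseteq> F \<Longrightarrow> arc_diagram n G"
  unfolding arc_diagram_def by (meson converse_mono order_trans single_valued_subset)

lemma card_Diff_Domain:
  assumes "arc_diagram n E" "finite A" "Domain E \<subseteq> A"
  shows "card (A - Domain E) = card A - card (Range E)"
  using assms card_Domain_eq_card_Range[OF assms(1)]
  by (simp add: card_Diff_subset finite_subset)

lemma arc_diagram_trancl_less:
  assumes "arc_diagram n F" "(x, y) \<in> F\<^sup>+"
  shows "x < y"
proof -
  have "F \<subseteq> {(x, y). x < y}" using assms(1) unfolding arc_diagram_def by auto
  then have "F\<^sup>+ \<subseteq> {(x, y). x < y}\<^sup>+" by (rule trancl_mono_subset)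
  also have "\<dots> = {(x, y). x < y}" by (rule trancl_id) (auto intro: transI)
  finally show ?thesis using assms(2) by auto
qed

lemma arc_diagram_component_rtrancl:
  assumes F: "arc_diagram n F" and xy: "(x, y) \<in> (F \<union> F\<inverse>)\<^sup>*"
  shows "(x, y) \<in> F\<^sup>* \<or> (y, x) \<in> F\<^sup>*"
  using xy
proof (induction rule: rtrancl_induct)
  case (step y z)
  have sv: "single_valued F" "single_valued (F\<inverse>)" using F unfolding arc_diagram_def by auto
  from step.hyps(2) show ?case
  proof
    assume yz: "(y, z) \<in> F"
    then show ?thesis
      using step.IH single_valued_confluent[OF sv(1), of y x z] by (auto intro: rtrancl_into_rtrancl)
  next
    assume "(y, z) \<in> F\<inverse>"
    then show ?thesis
      using step.IH single_valued_confluent[OF sv(2), of y x z]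
      by (auto simp: rtrancl_converse intro: converse_rtrancl_into_rtrancl)
  qed
qed simp

lemma arc_diagram_component_trancl:
  assumes F: "arc_diagram n F" and xy: "(x, y) \<in> (F \<union> F\<inverse>)\<^sup>*" and "x < y"
  shows "(x, y) \<in> F\<^sup>+"
  using arc_diagram_component_rtrancl[OF F xy] arc_diagram_trancl_less[OF F, of y x] \<open>x < y\<close>
  by (auto simp: rtrancl_eq_or_trancl)

lemma components_partition_Partitions: "components_partition n F \<in> Partitions n"
proof -
  let ?A = "{1..n}" and ?R = "(F \<union> F\<inverse>)\<^sup>*"
  have "sym ?R" by (rule sym_rtrancl[OF sym_Un_converse])
  then have "equiv ?A (?R \<inter> ?A \<times> ?A)"
    by (intro equivI) (auto simp: refl_on_def sym_def trans_def intro: rtrancl_trans)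
  moreover have "components_partition n F = ?A // (?R \<inter> ?A \<times> ?A)"
    unfolding components_partition_def quotient_def by auto
  ultimately show ?thesis by (simp add: Partitions_def partition_on_quotient)
qed

lemma rtrancl_Un_converse_sym: "(x, y) \<in> (F \<union> F\<inverse>)\<^sup>* \<Longrightarrow> (y, x) \<in> (F \<union> F\<inverse>)\<^sup>*"
  using sym_rtrancl[OF sym_Un_converse, of F] unfolding sym_def by blast

lemma edges_components_partition_subset:
  assumes F: "arc_diagram n F"
  shows "edges (components_partition n F) \<subseteq> F"
proof (intro subsetI)
  fix p assume p_edge: "p \<in> edges (components_partition n F)"
  obtain i j where p: "p = (i, j)" by fastforce
  let ?R = "(F \<union> F\<inverse>)\<^sup>*"
  obtain x where ij: "i < j" "(x, i) \<in> ?R" "(x, j) \<in> ?R"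
    and between: "\<And>k. (x, k) \<in> ?R \<Longrightarrow> 1 \<le> k \<Longrightarrow> k \<le> n \<Longrightarrow> i < k \<Longrightarrow> k < j \<Longrightarrow> False"
    using p_edge unfolding p edges_def components_partition_def by fastforce
  have "(i, j) \<in> F\<^sup>+"
    using arc_diagram_component_trancl[OF F _ ij(1)] rtrancl_Un_converse_sym[OF ij(2)] ij(3)
    by (meson rtrancl_trans)
  then show "p \<in> F"
  proof (rule converse_tranclE)
    show "(i, j) \<in> F \<Longrightarrow> p \<in> F" by (simp add: p)
  next
    fix w assume "(i, w) \<in> F" "(w, j) \<in> F\<^sup>+"
    then have "(x, w) \<in> ?R" "1 \<le> w" "w \<le> n" "i < w" "w < j"
      using ij(2) arc_diagramD(1)[OF F, of i w] arc_diagram_trancl_less[OF F, of w j]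
      by (simp_all add: rtrancl_into_rtrancl)
    then show "p \<in> F" using between by blast
  qed
qed

lemma subset_edges_components_partition:
  assumes F: "arc_diagram n F"
  shows "F \<subseteq> edges (components_partition n F)"
proof (intro subsetI)
  fix p assume "p \<in> F"
  moreover obtain i j where p: "p = (i, j)" by fastforce
  ultimately have ij: "(i, j) \<in> F" "1 \<le> i" "i < j" "j \<le> n" using arc_diagramD(1)[OF F] by auto
  define K where "K = (F \<union> F\<inverse>)\<^sup>* `` {i} \<inter> {1..n}"
  have "\<not> (i < k \<and> k < j)" if "k \<in> K" for k
  proof
    assume k: "i < k \<and> k < j"
    then have "(i, k) \<in> F\<^sup>+" using that arc_diagram_component_trancl[OF F] unfolding K_def by blast
    then obtain w where "(i, w) \<in> F" "(w, k) \<in> F\<^sup>*" by (meson tranclD)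
    then have "j \<le> k"
      using arc_diagramD(2)[OF F ij(1)] arc_diagram_trancl_less[OF F, of j k]
      by (auto simp: rtrancl_eq_or_trancl)
    with k show False by simp
  qed
  moreover have "i \<in> K" "j \<in> K" using ij unfolding K_def by (simp_all add: r_into_rtrancl)
  moreover have "K \<in> components_partition n F"
    using ij unfolding K_def components_partition_def by (intro CollectI exI[of _ i]) simp
  ultimately have "\<exists>B \<in> components_partition n F. i \<in> B \<and> j \<in> B \<and> \<not> (\<exists>k\<in>B. i < k \<and> k < j)"
    by blast
  then show "p \<in> edges (components_partition n F)"
    unfolding p edges_def using ij(3) by simp
qed

lemma edges_components_partition: "arc_diagram n F \<Longrightarrow> edges (components_partition n F) = F"
  using edges_components_partition_subset subset_edges_components_partition by blast

section \<open>The arc diagram of a set partition\<close>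

lemma finite_vacant: "finite (vacant P i)"
  unfolding vacant_def by simp

locale set_partition =
  fixes n :: nat and P :: setpart
  assumes partition: "P \<in> Partitions n"
begin

lemma block_subset: "B \<in> P \<Longrightarrow> B \<subseteq> {1..n}"
  using partition unfolding Partitions_def partition_on_def by auto

lemma finite_block: "B \<in> P \<Longrightarrow> finite B"
  using block_subset finite_subset by blast

lemma ex_block: "x \<in> {1..n} \<Longrightarrow> \<exists>B\<in>P. x \<in> B"
  using partition unfolding Partitions_def partition_on_def by auto

lemma block_eq: "B \<in> P \<Longrightarrow> B' \<in> P \<Longrightarrow> x \<in> B \<Longrightarrow> x \<in> B' \<Longrightarrow> B = B'"
  using partition unfolding Partitions_def partition_on_def disjoint_def by blast

lemma mem_edges_iff:
  assumes B: "B \<in> P" and "i \<in> B \<or> j \<in> B"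
  shows "(i, j) \<in> edges P \<longleftrightarrow> i \<in> B \<and> j \<in> B \<and> i < j \<and> (\<forall>k\<in>B. \<not> (i < k \<and> k < j))"
proof
  assume "(i, j) \<in> edges P"
  then obtain B' where B': "B' \<in> P" "i \<in> B'" "j \<in> B'" "i < j" "\<forall>k\<in>B'. \<not> (i < k \<and> k < j)"
    unfolding edges_def by blast
  moreover have "B' = B" using block_eq[OF B'(1) B] B' assms(2) by blast
  ultimately show "i \<in> B \<and> j \<in> B \<and> i < j \<and> (\<forall>k\<in>B. \<not> (i < k \<and> k < j))" by blast
qed (use B in \<open>auto simp: edges_def\<close>)

context
  fixes B x
  assumes B: "B \<in> P" and x: "x \<in> B"
begin

lemma Domain_edges_iff: "x \<in> Domain (edges P) \<longleftrightarrow> (\<exists>k\<in>B. x < k)"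
proof
  let ?S = "{k \<in> B. x < k}"
  assume "\<exists>k\<in>B. x < k"
  then have "finite ?S" "?S \<noteq> {}" using finite_block[OF B] by auto
  then have "Min ?S \<in> ?S" "\<forall>k\<in>?S. Min ?S \<le> k" using Min_in Min_le by blast+
  then have "(x, Min ?S) \<in> edges P" using x by (auto simp: mem_edges_iff[OF B] not_less)
  then show "x \<in> Domain (edges P)" by blast
qed (auto simp: mem_edges_iff[OF B] x)

lemma Range_edges_iff: "x \<in> Range (edges P) \<longleftrightarrow> (\<exists>k\<in>B. k < x)"
proof
  let ?S = "{k \<in> B. k < x}"
  assume "\<exists>k\<in>B. k < x"
  then have "finite ?S" "?S \<noteq> {}" using finite_block[OF B] by auto
  then have "Max ?S \<in> ?S" "\<forall>k\<in>?S. k \<le> Max ?S" using Max_in Max_ge by blast+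
  then have "(Max ?S, x) \<in> edges P" using x by (auto simp: mem_edges_iff[OF B] not_less)
  then show "x \<in> Range (edges P)" by blast
qed (auto simp: mem_edges_iff[OF B] x)

lemma two_le_card_block_iff: "2 \<le> card B \<longleftrightarrow> (\<exists>k\<in>B. k \<noteq> x)"
proof
  assume "\<exists>k\<in>B. k \<noteq> x"
  then obtain k where "k \<in> B" "k \<noteq> x" by blast
  then have "card {x, k} \<le> card B" using x finite_block[OF B] by (intro card_mono) auto
  then show "2 \<le> card B" using \<open>k \<noteq> x\<close> by simp
next
  assume "2 \<le> card B"
  show "\<exists>k\<in>B. k \<noteq> x"
  proof (rule ccontr)
    assume "\<not> (\<exists>k\<in>B. k \<noteq> x)"
    then have "B = {x}" using x by blast
    with \<open>2 \<le> card B\<close> show False by simp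
  qed
qed

lemma Min_block_iff: "Min B = x \<longleftrightarrow> \<not> (\<exists>k\<in>B. k < x)"
  using finite_block[OF B] x by (subst Min_eq_iff) (auto simp: not_less)

lemma Max_block_iff: "Max B = x \<longleftrightarrow> \<not> (\<exists>k\<in>B. x < k)"
  using finite_block[OF B] x by (subst Max_eq_iff) (auto simp: not_less)

lemma mem_openers_iff: "x \<in> openers P \<longleftrightarrow> (\<exists>k\<in>B. x < k) \<and> \<not> (\<exists>k\<in>B. k < x)"
proof -
  have "x \<in> openers P \<longleftrightarrow> 2 \<le> card B \<and> Min B = x"
  proof
    assume "x \<in> openers P"
    then obtain B' where B': "B' \<in> P" "2 \<le> card B'" "x = Min B'" unfolding openers_def by blast
    then have "x \<in> B'" using finite_block Min_in by fastforce
    then show "2 \<le> card B \<and> Min B = x" using block_eq[OF B' (1) B _ x] B' by simp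
  qed (auto simp: openers_def B)
  then show ?thesis by (auto simp: two_le_card_block_iff Min_block_iff linorder_neq_iff)
qed

lemma mem_closers_iff: "x \<in> closers P \<longleftrightarrow> (\<exists>k\<in>B. k < x) \<and> \<not> (\<exists>k\<in>B. x < k)"
proof -
  have "x \<in> closers P \<longleftrightarrow> 2 \<le> card B \<and> Max B = x"
  proof
    assume "x \<in> closers P"
    then obtain B' where B': "B' \<in> P" "2 \<le> card B'" "x = Max B'" unfolding closers_def by blast
    then have "x \<in> B'" using finite_block Max_in by fastforce
    then show "2 \<le> card B \<and> Max B = x" using block_eq[OF B' (1) B _ x] B' by simp
  qed (auto simp: closers_def B)
  then show ?thesis by (auto simp: two_le_card_block_iff Max_block_iff linorder_neq_iff)
qed

lemma mem_transients_iff: "x \<in> transients P \<longleftrightarrow> (\<exists>k\<in>B. x < k) \<and> (\<exists>k\<in>B. k < x)"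
proof -
  have "x \<in> transients P \<longleftrightarrow> 2 \<le> card B \<and> Min B \<noteq> x \<and> Max B \<noteq> x"
  proof
    assume "x \<in> transients P"
    then obtain B' where B': "B' \<in> P" "x \<in> B'" "2 \<le> card B'" "x \<noteq> Min B'" "x \<noteq> Max B'"
      unfolding transients_def by blast
    then show "2 \<le> card B \<and> Min B \<noteq> x \<and> Max B \<noteq> x" using block_eq[OF B'(1) B B'(2) x] by auto
  qed (use B x in \<open>auto simp: transients_def\<close>)
  then show ?thesis by (auto simp: two_le_card_block_iff Min_block_iff Max_block_iff linorder_neq_iff)
qed

lemma mem_singletons_iff: "x \<in> singletons P \<longleftrightarrow> \<not> (\<exists>k\<in>B. x < k) \<and> \<not> (\<exists>k\<in>B. k < x)"
proof -
  have "x \<in> singletons P \<longleftrightarrow> B = {x}"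
    unfolding singletons_def using block_eq[OF _ B _ x] B by auto
  then show ?thesis using x by (auto simp: linorder_neq_iff)
qed

end

lemma arc_diagram_edges: "arc_diagram n (edges P)"
proof -
  have "1 \<le> x \<and> x < y \<and> y \<le> n" if "(x, y) \<in> edges P" for x y
    using that block_subset unfolding edges_def by fastforce
  moreover have "y = z" if xy: "(x, y) \<in> edges P" and xz: "(x, z) \<in> edges P" for x y z
  proof -
    obtain B where "B \<in> P" "x \<in> B" using xy unfolding edges_def by blast
    then show "y = z" using xy xz by (simp add: mem_edges_iff) (meson linorder_neqE_nat)
  qed
  moreover have "x = y" if xz: "(x, z) \<in> edges P" and yz: "(y, z) \<in> edges P" for x y z
  proof -
    obtain B where "B \<in> P" "z \<in> B" using xz unfolding edges_def by blast
    then show "x = y" using xz yz by (simp add: mem_edges_iff) (meson linorder_neqE_nat)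
  qed
  ultimately show ?thesis unfolding arc_diagram_def single_valued_def by blast
qed

lemma Domain_Range_edges_subset: "Domain (edges P) \<union> Range (edges P) \<subseteq> {1..n}"
  using arc_diagramD(1)[OF arc_diagram_edges] by fastforce

lemma edges_trancl_block:
  assumes B: "B \<in> P" and x: "x \<in> B"
  shows "y \<in> B \<Longrightarrow> x < y \<Longrightarrow> (x, y) \<in> (edges P)\<^sup>+"
proof (induction y rule: less_induct)
  case (less y)
  let ?S = "{k \<in> B. k < y}" and ?z = "Max {k \<in> B. k < y}"
  have S: "finite ?S" "x \<in> ?S" using finite_block[OF B] x less.prems by auto
  then have "?z \<in> ?S" "x \<le> ?z" "\<forall>k\<in>?S. k \<le> ?z" by (metis Max_in empty_iff, simp_all)
  then obtain z where z: "z \<in> B" "x \<le> z" "z < y" and max: "\<forall>k\<in>B. k < y \<longrightarrow> k \<le> z"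
    by blast
  have "\<forall>k\<in>B. \<not> (z < k \<and> k < y)" using max by (meson not_le)
  then have edge: "(z, y) \<in> edges P" using mem_edges_iff[OF B] z less.prems(1) by blast
  show ?case
  proof (cases "x = z")
    case False
    then have "(x, z) \<in> (edges P)\<^sup>+" using less.IH z by simp
    then show ?thesis using edge by simp
  qed (use edge in simp)
qed

lemma component_block:
  assumes B: "B \<in> P" and x: "x \<in> B"
  shows "(edges P \<union> (edges P)\<inverse>)\<^sup>* `` {x} = B"
proof
  show "(edges P \<union> (edges P)\<inverse>)\<^sup>* `` {x} \<subseteq> B"
  proof
    fix z assume "z \<in> (edges P \<union> (edges P)\<inverse>)\<^sup>* `` {x}"
    then have "(x, z) \<in> (edges P \<union> (edges P)\<inverse>)\<^sup>*" by simp
    then show "z \<in> B"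
      by (induction rule: rtrancl_induct) (use x mem_edges_iff[OF B] in blast)+
  qed
  show "B \<subseteq> (edges P \<union> (edges P)\<inverse>)\<^sup>* `` {x}"
  proof
    fix z assume z: "z \<in> B"
    have "(x, z) \<in> (edges P)\<^sup>* \<or> (z, x) \<in> (edges P)\<^sup>*"
      using edges_trancl_block[OF B x z] edges_trancl_block[OF B z x]
      by (cases x z rule: linorder_cases) (auto dest: trancl_into_rtrancl)
    then have "(x, z) \<in> (edges P \<union> (edges P)\<inverse>)\<^sup>*"
      by (meson in_rtrancl_UnI rtrancl_converseI)
    then show "z \<in> (edges P \<union> (edges P)\<inverse>)\<^sup>* `` {x}" by simp
  qed
qed

lemma components_partition_edges: "components_partition n (edges P) = P"
proof (intro set_eqI iffI)
  fix C assume "C \<in> components_partition n (edges P)"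
  then obtain x where "x \<in> {1..n}" "C = (edges P \<union> (edges P)\<inverse>)\<^sup>* `` {x} \<inter> {1..n}"
    unfolding components_partition_def by blast
  then show "C \<in> P" using ex_block component_block block_subset by (metis inf.absorb1)
next
  fix B assume B: "B \<in> P"
  have "B \<noteq> {}" using partition B unfolding Partitions_def partition_on_def by auto
  then obtain x where x: "x \<in> B" by blast
  then have "B = (edges P \<union> (edges P)\<inverse>)\<^sup>* `` {x} \<inter> {1..n}" "x \<in> {1..n}"
    using component_block[OF B x] block_subset[OF B] by auto
  then show "B \<in> components_partition n (edges P)"
    unfolding components_partition_def by blast
qed

lemma roles_subset: "openers P \<union> closers P \<union> singletons P \<union> transients P \<subseteq> {1..n}"
proof -
  have "Min B \<in> B \<and> Max B \<in> B" if "B \<in> P" "2 \<le> card B" for B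
    using that finite_block by (metis Max_in Min_in card.empty not_numeral_le_zero)
  then show ?thesis
    unfolding openers_def closers_def singletons_def transients_def using block_subset by blast
qed

lemma roles_eq_edges:
  shows openers_eq: "openers P = Domain (edges P) - Range (edges P)"
    and closers_eq: "closers P = Range (edges P) - Domain (edges P)"
    and singletons_eq: "singletons P = {1..n} - (Domain (edges P) \<union> Range (edges P))"
    and transients_eq: "transients P = Domain (edges P) \<inter> Range (edges P)"
proof -
  have "(x \<in> openers P \<longleftrightarrow> x \<in> Domain (edges P) - Range (edges P)) \<and>
        (x \<in> closers P \<longleftrightarrow> x \<in> Range (edges P) - Domain (edges P)) \<and>
        (x \<in> singletons P \<longleftrightarrow> x \<in> {1..n} - (Domain (edges P) \<union> Range (edges P))) \<and>
        (x \<in> transients P \<longleftrightarrow> x \<in> Domain (edges P) \<inter> Range (edges P))" for x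
  proof (cases "x \<in> {1..n}")
    case True
    then obtain B where B: "B \<in> P" "x \<in> B" using ex_block by blast
    show ?thesis
      using mem_openers_iff[OF B] mem_closers_iff[OF B] mem_singletons_iff[OF B]
        mem_transients_iff[OF B] Domain_edges_iff[OF B] Range_edges_iff[OF B] True
      by blast
  next
    case False
    then show ?thesis using roles_subset Domain_Range_edges_subset by blast
  qed
  then show "openers P = Domain (edges P) - Range (edges P)"
    and "closers P = Range (edges P) - Domain (edges P)"
    and "singletons P = {1..n} - (Domain (edges P) \<union> Range (edges P))"
    and "transients P = Domain (edges P) \<inter> Range (edges P)"
    by blast+
qed

lemma pred_vertex_eq: "(j, i) \<in> edges P \<Longrightarrow> pred_vertex P i = j"
  unfolding pred_vertex_def using arc_diagramD(3)[OF arc_diagram_edges] by blast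

lemma pred_vertex_edge: "i \<in> Range (edges P) \<Longrightarrow> (pred_vertex P i, i) \<in> edges P"
  using pred_vertex_eq by blast

lemma vacant_Suc_eq: "vacant P (Suc m) = {..m} \<inter> Domain (edges P) - Domain (edges P \<inter> UNIV \<times> {..m})"
  using arc_diagramD(2)[OF arc_diagram_edges] unfolding vacant_def by (fastforce simp: not_le)

lemma pred_vertex_vacant: "i \<in> Range (edges P) \<Longrightarrow> pred_vertex P i \<in> vacant P i"
  using pred_vertex_edge arc_diagramD(1)[OF arc_diagram_edges] unfolding vacant_def by blast

lemma gamma_bounds:
  assumes "i \<in> Range (edges P)"
  shows "1 \<le> gamma P i" "gamma P i \<le> card (vacant P i)"
  using pred_vertex_vacant[OF assms] finite_vacant
  unfolding gamma_def by (auto simp: Suc_le_eq card_gt_0_iff intro: card_mono)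

lemma edges_restrict_Suc:
  "edges P \<inter> UNIV \<times> {..Suc m} =
    (if Suc m \<in> Range (edges P)
     then insert (pred_vertex P (Suc m), Suc m) (edges P \<inter> UNIV \<times> {..m})
     else edges P \<inter> UNIV \<times> {..m})"
  using pred_vertex_eq pred_vertex_edge by (auto simp: atMost_Suc)

lemma phi_step_eq:
  "phi_step P st i =
    (if i \<in> Range (edges P) then
       (let x = kth_largest (fst st) (gamma P i)
        in (fst st - {x} \<union> {i} \<inter> Domain (edges P), insert (x, i) (snd st)))
     else (fst st \<union> {i} \<inter> Domain (edges P), snd st))"
  unfolding phi_step_def openers_eq closers_eq transients_eq by (auto simp: Let_def)

end

section \<open>The construction\<close>

definition phi_invariant :: "setpart \<Rightarrow> nat \<Rightarrow> nat set \<Rightarrow> (nat \<times> nat) set \<Rightarrow> bool" where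
  "phi_invariant P m V E \<longleftrightarrow>
     arc_diagram m E \<and> Range E = Range (edges P) \<inter> {..m} \<and> Domain E \<subseteq> Domain (edges P) \<and>
     V = {..m} \<inter> Domain (edges P) - Domain E"

lemma phi_state_0 [simp]: "phi_state P 0 = ({}, {})"
  by (simp add: phi_state_def)

lemma phi_state_Suc [simp]: "phi_state P (Suc m) = phi_step P (phi_state P m) (Suc m)"
  by (simp add: phi_state_def)

lemma snd_phi_step: "snd st \<subseteq> snd (phi_step P st i)" "snd (phi_step P st i) \<subseteq> snd st \<union> UNIV \<times> {i}"
  by (auto simp: phi_step_def Let_def)

lemma snd_phi_state_subset: "snd (phi_state P m) \<subseteq> UNIV \<times> {..m}"
  by (induction m) (use snd_phi_step(2) in \<open>fastforce+\<close>)

lemma snd_phi_state_restrict: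
  assumes "m \<le> k"
  shows "snd (phi_state P m) = snd (phi_state P k) \<inter> UNIV \<times> {..m}"
  using assms
proof (induction k rule: dec_induct)
  case base
  then show ?case using snd_phi_state_subset by blast
next
  case (step j)
  then show ?case using snd_phi_step[where P = P and st = "phi_state P j" and i = "Suc j"] by auto
qed

lemma phi_Partitions: "phi n P \<in> Partitions n"
  unfolding phi_def by (rule components_partition_Partitions)

context set_partition
begin

lemma phi_invariant_card:
  assumes "phi_invariant P m V E"
  shows "card V = card (vacant P (Suc m))"
proof -
  \<comment> \<open>Both sides count the left endpoints up to m minus the right endpoints up to m.\<close>
  let ?F = "edges P \<inter> UNIV \<times> {..m}"
  have E: "arc_diagram m E" "Domain E \<subseteq> {..m} \<inter> Domain (edges P)"
    using assms unfolding phi_invariant_def arc_diagram_def by auto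
  have "card V = card ({..m} \<inter> Domain (edges P)) - card (Range E)"
    using assms card_Diff_Domain[OF E(1) _ E(2)] unfolding phi_invariant_def by simp
  also have "Range E = Range ?F"
    using assms unfolding phi_invariant_def by auto
  also have "Domain ?F \<subseteq> {..m} \<inter> Domain (edges P)"
    using arc_diagramD(1)[OF arc_diagram_edges] by fastforce
  then have "card ({..m} \<inter> Domain (edges P)) - card (Range ?F) = card (vacant P (Suc m))"
    using card_Diff_Domain[OF arc_diagram_subset[OF arc_diagram_edges]] by (simp add: vacant_Suc_eq)
  finally show ?thesis .
qed

lemma phi_invariant_Suc:
  assumes inv: "phi_invariant P m V E"
  shows "phi_invariant P (Suc m) (fst (phi_step P (V, E) (Suc m))) (snd (phi_step P (V, E) (Suc m)))"
proof -
  let ?i = "Suc m" and ?D = "Domain (edges P)" and ?R = "Range (edges P)"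
  have E: "arc_diagram m E" "Range E = ?R \<inter> {..m}" "Domain E \<subseteq> ?D"
    and V: "V = {..m} \<inter> ?D - Domain E"
    using inv unfolding phi_invariant_def by auto
  have i_free: "?i \<notin> Domain E" "?i \<notin> Range E" using arc_diagramD(1)[OF E(1)] by force+
  show ?thesis
  proof (cases "?i \<in> ?R")
    case False
    then show ?thesis using E V i_free arc_diagram_mono[OF E(1)]
      by (auto simp: phi_step_eq phi_invariant_def atMost_Suc)
  next
    case True
    define x where "x = kth_largest V (gamma P ?i)"
    have "finite V" using V by auto
    moreover have "1 \<le> gamma P ?i" "gamma P ?i \<le> card V"
      using gamma_bounds[OF True] phi_invariant_card[OF inv] by simp_all
    ultimately have "x \<in> V" unfolding x_def by (rule kth_largest_mem_rank)
    then have x: "1 \<le> x" "x \<le> m" "x \<in> ?D" "x \<notin> Domain E"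
      using V arc_diagramD(1)[OF arc_diagram_edges] by auto
    have "arc_diagram ?i (insert (x, ?i) E)"
      using x i_free by (intro arc_diagram_insert arc_diagram_mono[OF E(1)]) auto
    moreover have "phi_step P (V, E) ?i = (V - {x} \<union> {?i} \<inter> ?D, insert (x, ?i) E)"
      using True by (simp add: phi_step_eq x_def Let_def)
    ultimately show ?thesis
      using True E V x i_free by (auto simp: phi_invariant_def atMost_Suc)
  qed
qed

lemma phi_state_invariant: "phi_invariant P m (fst (phi_state P m)) (snd (phi_state P m))"
proof (induction m)
  case 0
  have "0 \<notin> Domain (edges P) \<union> Range (edges P)" using Domain_Range_edges_subset by auto
  then show ?case by (auto simp: phi_invariant_def arc_diagram_def)
next
  case (Suc m)
  then show ?case using phi_invariant_Suc by (metis phi_state_Suc prod.collapse)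
qed

lemma phi_state_final:
  shows arc_diagram_phi_state: "arc_diagram n (snd (phi_state P n))"
    and Domain_phi_state: "Domain (snd (phi_state P n)) = Domain (edges P)"
    and Range_phi_state: "Range (snd (phi_state P n)) = Range (edges P)"
proof -
  obtain V E where st: "phi_state P n = (V, E)" by fastforce
  have inv: "phi_invariant P n V E" using phi_state_invariant[of n] st by simp
  have bounds: "Domain (edges P) \<subseteq> {..n}" "Range (edges P) \<subseteq> {..n}"
    using Domain_Range_edges_subset by auto
  have "vacant P (Suc n) = {}"
    using arc_diagramD(1)[OF arc_diagram_edges] unfolding vacant_def by fastforce
  moreover have "finite V" using inv unfolding phi_invariant_def by simp
  ultimately have "V = {}" using phi_invariant_card[OF inv] by simp
  then show "arc_diagram n (snd (phi_state P n))"
    and "Domain (snd (phi_state P n)) = Domain (edges P)"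
    and "Range (snd (phi_state P n)) = Range (edges P)"
    using inv bounds st unfolding phi_invariant_def by auto
qed

lemma edges_phi: "edges (phi n P) = snd (phi_state P n)"
  unfolding phi_def by (rule edges_components_partition[OF arc_diagram_phi_state])

section \<open>Type preservation and involution\<close>

lemma ptype_phi: "ptype (phi n P) = ptype P"
proof -
  interpret Q: set_partition n "phi n P" by unfold_locales (rule phi_Partitions)
  show ?thesis
    unfolding ptype_def openers_eq closers_eq singletons_eq transients_eq
      Q.openers_eq Q.closers_eq Q.singletons_eq Q.transients_eq
      edges_phi Domain_phi_state Range_phi_state ..
qed

lemma fst_phi_state_eq_vacant:
  assumes Q: "Q \<in> Partitions n" and D: "Domain (edges Q) = Domain (edges P)"
    and E: "snd (phi_state P m) = edges Q \<inter> UNIV \<times> {..m}"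
  shows "fst (phi_state P m) = vacant Q (Suc m)"
  using phi_state_invariant[of m] set_partition.vacant_Suc_eq[OF set_partition.intro[OF Q]] D E
  unfolding phi_invariant_def by simp

lemma gamma_phi:
  assumes i: "i \<in> Range (edges P)"
  shows "gamma (phi n P) i = card (vacant P i) + 1 - gamma P i"
proof -
  interpret Q: set_partition n "phi n P" by unfold_locales (rule phi_Partitions)
  have "i \<in> {1..n}" using i Domain_Range_edges_subset by blast
  then obtain m where m: "i = Suc m" "m < n" by (intro that[of "i - 1"]) auto
  have vac: "fst (phi_state P m) = vacant (phi n P) i"
    using fst_phi_state_eq_vacant[OF phi_Partitions] snd_phi_state_restrict[of m n] m
    by (simp add: edges_phi Domain_phi_state)
  define x where "x = kth_largest (vacant (phi n P) i) (gamma P i)"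
  have "(x, i) \<in> snd (phi_state P i)"
    using i vac m by (simp add: phi_step_eq x_def Let_def)
  then have "(x, i) \<in> edges (phi n P)"
    using snd_phi_state_restrict[of i n] m by (auto simp: edges_phi)
  then have pred: "pred_vertex (phi n P) i = x" by (rule Q.pred_vertex_eq)
  have card: "card (vacant (phi n P) i) = card (vacant P i)"
    using phi_invariant_card[OF phi_state_invariant[of m]] vac m by simp
  \<comment> \<open>Rank gamma P i from the top is rank |V'| + 1 - gamma P i from the bottom.\<close>
  show ?thesis
    using kth_largest_mem_rank(2)[of "vacant (phi n P) i" "gamma P i"] gamma_bounds[OF i] card
    unfolding gamma_def[of "phi n P"] pred x_def by (simp add: finite_vacant)
qed

lemma snd_phi_state_phi: "m \<le> n \<Longrightarrow> snd (phi_state (phi n P) m) = edges P \<inter> UNIV \<times> {..m}"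
proof (induction m)
  case 0
  then show ?case using Domain_Range_edges_subset by fastforce
next
  case (Suc m)
  interpret Q: set_partition n "phi n P" by unfold_locales (rule phi_Partitions)
  let ?i = "Suc m"
  have IH: "snd (phi_state (phi n P) m) = edges P \<inter> UNIV \<times> {..m}" using Suc by simp
  have vac: "fst (phi_state (phi n P) m) = vacant P ?i"
    using Q.fst_phi_state_eq_vacant[OF partition _ IH] by (simp add: edges_phi Domain_phi_state)
  have "kth_largest (vacant P ?i) (gamma (phi n P) ?i) = pred_vertex P ?i" if "?i \<in> Range (edges P)"
    using kth_largest_rank[OF finite_vacant pred_vertex_vacant[OF that]]
    unfolding gamma_phi[OF that] gamma_def[of P] by simp
  then show ?case
    using IH vac by (simp add: Q.phi_step_eq edges_phi Range_phi_state edges_restrict_Suc Let_def)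
qed

lemma phi_phi: "phi n (phi n P) = P"
proof -
  have "edges P \<inter> UNIV \<times> {..n} = edges P" using Domain_Range_edges_subset by fastforce
  then show ?thesis
    unfolding phi_def[of n "phi n P"] using snd_phi_state_phi[of n] components_partition_edges by simp
qed

end

theorem lemma2p1:
  fixes n :: nat and P :: "nat set set"
  assumes "n \<ge> 1" and "P \<in> Partitions n"
  shows "(\<forall>i \<in> closers P \<union> transients P.
            gamma P i \<le> card (fst (phi_state P (i - 1))))
         \<and> (\<exists>Q \<in> Partitions n. edges Q = snd (phi_state P n))
         \<and> phi n P \<in> Partitions n
         \<and> edges (phi n P) = snd (phi_state P n)
         \<and> phi n (phi n P) = P
         \<and> ptype (phi n P) = ptype P"
proof -
  interpret set_partition n P by unfold_locales (rule assms(2))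
  have "gamma P i \<le> card (fst (phi_state P (i - 1)))" if "i \<in> closers P \<union> transients P" for i
  proof -
    have i: "i \<in> Range (edges P)" using that by (auto simp: closers_eq transients_eq)
    then have "Suc (i - 1) = i" using Domain_Range_edges_subset by fastforce
    then show ?thesis
      using gamma_bounds(2)[OF i] phi_invariant_card[OF phi_state_invariant[of "i - 1"]] by simp
  qed
  then show ?thesis using phi_Partitions edges_phi phi_phi ptype_phi by blast
qed

end
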